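(* Let $K\ge 2$, let $f:\mathbb{R}^3\to\mathbb{R}^K$ be an arbitrary function, and let $\mathbf{p}_1,\mathbf{p}_2\in\mathbb{R}^3$ with $\mathbf{u}_1=f(\mathbf{p}_1)$ and $\mathbf{u}_2=f(\mathbf{p}_2)$ satisfying $\min^{(1)}(\mathbf{u}_i)+\min^{(2)}(\mathbf{u}_i)\ge 0$ for $i=1,2$. Then for every $\alpha\in[0,1]$, the linearly interpolated vector $\mathbf{u}_\alpha=\alpha\mathbf{u}_1+(1-\alpha)\mathbf{u}_2$ (associated with the point $\alpha\mathbf{p}_1+(1-\alpha)\mathbf{p}_2$ on the segment joining $\mathbf{p}_1$ and $\mathbf{p}_2$) also satisfies $\min^{(1)}(\mathbf{u}_\alpha)+\min^{(2)}(\mathbf{u}_\alpha)\ge 0$.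
   Context: For a vector $\mathbf{u}\in\mathbb{R}^K$, $\min^{(n)}(\mathbf{u})$ denotes the $n$-th smallest entry of $\mathbf{u}$ (counted with multiplicity). *)

theory Defs
  imports "HOL-Analysis.Analysis" "HOL-Library.Multiset"
begin

text \<open>n-th smallest entry (1-indexed, counted with multiplicity) of a vector.\<close>
definition nth_min :: "nat \<Rightarrow> real ^ 'k \<Rightarrow> real" where
  "nth_min n u = sorted_list_of_multiset (image_mset (\<lambda>i. u $ i) (mset_set (UNIV :: 'k set))) ! (n - 1)"

end

theory Submission
  imports Defs
begin

text \<open>
  The sum of the two smallest entries of \<open>u\<close> is the minimum of \<open>u\<^sub>i + u\<^sub>j\<close> over all
  pairs \<open>i \<noteq> j\<close>. As a minimum of linear functionals it is concave in \<open>u\<close>, so its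
  value at a convex combination dominates the same convex combination of its values,
  and nonnegativity at the endpoints carries over to the whole segment.
\<close>

lemma sorted_first_two_le_any_two:
  fixes x y a b :: "'a::linordered_ab_semigroup_add"
  assumes "sorted (x # y # r)" and "{#a, b#} \<subseteq># mset (x # y # r)"
  shows "x + y \<le> a + b"
proof (cases "a = x")
  case True
  then have "b \<in># mset (y # r)"
    using assms(2) by (simp add: insert_subset_eq_iff)
  then have "y \<le> b"
    using assms(1) by auto
  then show ?thesis
    using True by (simp add: add_left_mono)
next
  case False
  then have "a \<in># mset (y # r)" and "b \<in># mset (x # y # r)"
    using assms(2) by (auto dest: mset_subset_eqD)
  then have "y \<le> a" and "x \<le> b"
    using assms(1) by auto
  then show ?thesis
    by (metis add_mono add.commute)
qed

lemma image_mset_mset_set_eq_add_mset2: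
  assumes "finite A" and "image_mset g (mset_set A) = add_mset x (add_mset y M)"
  shows "\<exists>i\<in>A. \<exists>j\<in>A. i \<noteq> j \<and> x = g i \<and> y = g j"
proof -
  have "x \<in># image_mset g (mset_set A)"
    using assms(2) by simp
  then obtain i where i: "i \<in> A" "x = g i"
    using assms(1) by auto
  have "image_mset g (mset_set (A - {i})) = add_mset y M"
    using assms i by (simp add: mset_set_Diff image_mset_Diff)
  then have "y \<in># image_mset g (mset_set (A - {i}))"
    by simp
  then obtain j where "j \<in> A - {i}" "y = g j"
    using assms(1) by auto
  then show ?thesis
    using i by (intro bexI[of _ i] bexI[of _ j]) auto
qed

definition sorted_entries :: "('a::linorder, 'k::finite) vec \<Rightarrow> 'a list" where
  "sorted_entries u = sorted_list_of_multiset (image_mset (\<lambda>i. u $ i) (mset_set UNIV))"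

lemma nth_min_eq_sorted_entries: "nth_min n u = sorted_entries u ! (n - 1)"
  by (simp add: nth_min_def sorted_entries_def)

lemma mset_sorted_entries:
  "mset (sorted_entries u) = image_mset (\<lambda>i. u $ i) (mset_set UNIV)"
  by (simp add: sorted_entries_def)

lemma sorted_sorted_entries: "sorted (sorted_entries u)"
  by (simp add: sorted_entries_def)

lemma length_sorted_entries:
  "length (sorted_entries (u :: ('a::linorder, 'k::finite) vec)) = CARD('k)"
  by (metis mset_sorted_entries size_image_mset size_mset size_mset_set)

lemma sorted_entries_Cons2:
  fixes u :: "('a::linorder, 'k::finite) vec"
  assumes "CARD('k) \<ge> 2"
  obtains x y r where "sorted_entries u = x # y # r"
proof -
  have "Suc (Suc 0) \<le> length (sorted_entries u)"
    using assms by (simp add: length_sorted_entries)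
  then show ?thesis
    using that by (auto simp: Suc_le_length_iff)
qed

lemma nth_min_1_2_le:
  fixes u :: "real ^ 'k"
  assumes "i \<noteq> j"
  shows "nth_min 1 u + nth_min 2 u \<le> u $ i + u $ j"
proof -
  have "CARD('k) \<ge> 2"
    using assms card_mono[of UNIV "{i, j}"] by simp
  then obtain x y r where xyr: "sorted_entries u = x # y # r"
    by (rule sorted_entries_Cons2)
  have "mset_set {i, j} \<subseteq># mset_set (UNIV :: 'k set)"
    by (rule subset_imp_msubset_mset_set) simp_all
  moreover have "mset_set {i, j} = {#i, j#}"
    using assms by simp
  ultimately have "{#u $ i, u $ j#} \<subseteq># mset (sorted_entries u)"
    unfolding mset_sorted_entries using image_mset_subseteq_mono[of _ _ "\<lambda>i. u $ i"]
    by fastforce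
  then have "{#u $ i, u $ j#} \<subseteq># mset (x # y # r)"
    by (simp only: xyr)
  then have "x + y \<le> u $ i + u $ j"
    using sorted_first_two_le_any_two sorted_sorted_entries xyr by metis
  then show ?thesis
    by (simp add: nth_min_eq_sorted_entries xyr)
qed

lemma nth_min_1_2_attained:
  fixes u :: "real ^ 'k"
  assumes "CARD('k) \<ge> 2"
  shows "\<exists>i j. i \<noteq> j \<and> nth_min 1 u + nth_min 2 u = u $ i + u $ j"
proof -
  obtain x y r where xyr: "sorted_entries u = x # y # r"
    using sorted_entries_Cons2[OF assms] .
  then have "image_mset (\<lambda>i. u $ i) (mset_set UNIV) = add_mset x (add_mset y (mset r))"
    using mset_sorted_entries[of u] by simp
  from image_mset_mset_set_eq_add_mset2[OF finite this]
  obtain i j where "i \<noteq> j" "x = u $ i" "y = u $ j"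
    by auto
  then show ?thesis
    by (intro exI[of _ i] exI[of _ j]) (simp add: nth_min_eq_sorted_entries xyr)
qed

lemma concave_on_nth_min_1_2:
  assumes "CARD('k) \<ge> 2"
  shows "concave_on UNIV (\<lambda>u :: real ^ 'k. nth_min 1 u + nth_min 2 u)"
  unfolding concave_on_iff
proof (intro conjI convex_UNIV ballI allI impI)
  fix v w :: "real ^ 'k" and s t :: real
  assume "s \<ge> 0" "t \<ge> 0" "s + t = 1"
  obtain i j where ij: "i \<noteq> j"
    "nth_min 1 (s *\<^sub>R v + t *\<^sub>R w) + nth_min 2 (s *\<^sub>R v + t *\<^sub>R w)
       = (s *\<^sub>R v + t *\<^sub>R w) $ i + (s *\<^sub>R v + t *\<^sub>R w) $ j"
    using nth_min_1_2_attained[OF assms] by blast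
  have "s * (nth_min 1 v + nth_min 2 v) + t * (nth_min 1 w + nth_min 2 w)
      \<le> s * (v $ i + v $ j) + t * (w $ i + w $ j)"
    using \<open>s \<ge> 0\<close> \<open>t \<ge> 0\<close> nth_min_1_2_le[OF ij(1)]
    by (intro add_mono[OF mult_left_mono mult_left_mono]) simp_all
  also have "\<dots> = (s *\<^sub>R v + t *\<^sub>R w) $ i + (s *\<^sub>R v + t *\<^sub>R w) $ j"
    by (simp add: distrib_left)
  finally show "s * (nth_min 1 v + nth_min 2 v) + t * (nth_min 1 w + nth_min 2 w)
      \<le> nth_min 1 (s *\<^sub>R v + t *\<^sub>R w) + nth_min 2 (s *\<^sub>R v + t *\<^sub>R w)"
    using ij(2) by simp
qed

theorem theorem2:
  fixes f :: "real ^ 3 \<Rightarrow> real ^ 'k"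
    and p1 p2 :: "real ^ 3"
    and u1 u2 :: "real ^ 'k"
  assumes "CARD('k) \<ge> 2"
    and "u1 = f p1" and "u2 = f p2"
    and "nth_min 1 u1 + nth_min 2 u1 \<ge> 0"
    and "nth_min 1 u2 + nth_min 2 u2 \<ge> 0"
  shows "\<forall>\<alpha>\<in>{0..1::real}.
           nth_min 1 (\<alpha> *\<^sub>R u1 + (1 - \<alpha>) *\<^sub>R u2) + nth_min 2 (\<alpha> *\<^sub>R u1 + (1 - \<alpha>) *\<^sub>R u2) \<ge> 0"
proof
  fix \<alpha> :: real
  assume "\<alpha> \<in> {0..1}"
  then have "\<alpha> * (nth_min 1 u1 + nth_min 2 u1) + (1 - \<alpha>) * (nth_min 1 u2 + nth_min 2 u2)
      \<le> nth_min 1 (\<alpha> *\<^sub>R u1 + (1 - \<alpha>) *\<^sub>R u2) + nth_min 2 (\<alpha> *\<^sub>R u1 + (1 - \<alpha>) *\<^sub>R u2)"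
    using concave_on_nth_min_1_2[OF assms(1)] by (simp add: concave_on_iff)
  moreover have "\<alpha> * (nth_min 1 u1 + nth_min 2 u1) + (1 - \<alpha>) * (nth_min 1 u2 + nth_min 2 u2) \<ge> 0"
    using \<open>\<alpha> \<in> {0..1}\<close> assms(4,5) by simp
  ultimately show "nth_min 1 (\<alpha> *\<^sub>R u1 + (1 - \<alpha>) *\<^sub>R u2) + nth_min 2 (\<alpha> *\<^sub>R u1 + (1 - \<alpha>) *\<^sub>R u2) \<ge> 0"
    by linarith
qed

end
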